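(* Assume the Lipschitz gradient assumption, $r_1>L_x$, $r_2>L_y$, and let $\{(x^t,y^t,z^t,v^t)\}$ be generated by DS-GDA with $c,\alpha>0$, $\beta,\mu\in(0,1)$. Then for every $t\ge0$, $$d(y^{t+1},z^{t+1},v^{t+1})\ge d(y^t,z^t,v^t)+\frac{(2-\mu)r_2}{2\mu}\|v^{t+1}-v^t\|^2+\frac{r_1}{2}\langle z^{t+1}+z^t-2x(y^{t+1},z^{t+1},v^t),z^{t+1}-z^t\rangle+\langle\nabla_yF(x(y^t,z^t,v^t),y^t,z^t,v^t),y^{t+1}-y^t\rangle-\frac{L_d}{2}\|y^{t+1}-y^t\|^2,$$ where $L_d=L_y\sigma_1+L_y+r_2$, $\sigma_1=\frac{L_y+r_1-L_x}{r_1-L_x}$.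
   Context: Let $\mathcal X\subset\mathbb R^n$, $\mathcal Y\subset\mathbb R^d$ be nonempty convex compact sets and $f:\mathbb R^n\times\mathbb R^d\to\mathbb R$ continuously differentiable. Lipschitz gradient assumption: there are $L_x,L_y>0$ such that for all $x,x'\in\mathcal X$, $y,y'\in\mathcal Y$, $\|\nabla_x f(x,y)-\nabla_x f(x',y')\|\le L_x(\|x-x'\|+\|y-y'\|)$ and $\|\nabla_y f(x,y)-\nabla_y f(x',y')\|\le L_y(\|x-x'\|+\|y-y'\|)$. $F(x,y,z,v)=f(x,y)+\frac{r_1}{2}\|x-z\|^2-\frac{r_2}{2}\|y-v\|^2$; $d(y,z,v)=\min_{x\in\mathcal X}F(x,y,z,v)$ with unique minimizer $x(y,z,v)$. DS-GDA: given $x^0,y^0,z^0,v^0$, for $t\ge0$: $x^{t+1}=\mathrm{proj}_{\mathcal X}(x^t-c\nabla_xF(x^t,y^t,z^t,v^t))$; $y^{t+1}=\mathrm{proj}_{\mathcal Y}(y^t+\alpha\nabla_yF(x^{t+1},y^t,z^t,v^t))$; $z^{t+1}=z^t+\beta(x^{t+1}-z^t)$; $v^{t+1}=v^t+\mu(y^{t+1}-v^t)$. *)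

theory Defs
  imports "HOL-Analysis.Analysis"
begin

definition FF :: "('a::euclidean_space \<Rightarrow> 'b::euclidean_space \<Rightarrow> real) \<Rightarrow> real \<Rightarrow> real
    \<Rightarrow> 'a \<Rightarrow> 'b \<Rightarrow> 'a \<Rightarrow> 'b \<Rightarrow> real" where
  "FF f r1 r2 x y z v = f x y + r1 / 2 * (norm (x - z))\<^sup>2 - r2 / 2 * (norm (y - v))\<^sup>2"

definition gradxF :: "('a::euclidean_space \<Rightarrow> 'b::euclidean_space \<Rightarrow> 'a) \<Rightarrow> real
    \<Rightarrow> 'a \<Rightarrow> 'b \<Rightarrow> 'a \<Rightarrow> 'b \<Rightarrow> 'a" where
  "gradxF gx r1 x y z v = gx x y + r1 *\<^sub>R (x - z)"

definition gradyF :: "('a::euclidean_space \<Rightarrow> 'b::euclidean_space \<Rightarrow> 'b) \<Rightarrow> real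
    \<Rightarrow> 'a \<Rightarrow> 'b \<Rightarrow> 'a \<Rightarrow> 'b \<Rightarrow> 'b" where
  "gradyF gy r2 x y z v = gy x y - r2 *\<^sub>R (y - v)"

definition dfun :: "('a::euclidean_space \<Rightarrow> 'b::euclidean_space \<Rightarrow> real) \<Rightarrow> real \<Rightarrow> real
    \<Rightarrow> 'a set \<Rightarrow> 'b \<Rightarrow> 'a \<Rightarrow> 'b \<Rightarrow> real" where
  "dfun f r1 r2 X y z v = (INF x\<in>X. FF f r1 r2 x y z v)"

definition xopt :: "('a::euclidean_space \<Rightarrow> 'b::euclidean_space \<Rightarrow> real) \<Rightarrow> real \<Rightarrow> real
    \<Rightarrow> 'a set \<Rightarrow> 'b \<Rightarrow> 'a \<Rightarrow> 'b \<Rightarrow> 'a" where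
  "xopt f r1 r2 X y z v =
     (THE x. x \<in> X \<and> (\<forall>x'\<in>X. FF f r1 r2 x y z v \<le> FF f r1 r2 x' y z v))"

end

theory Submission
  imports Defs
begin

text \<open>
  The three blocks of a DS-GDA step are estimated one at a time, passing from (y,z,v) at time t
  to time t+1 first in y, then in z, then in v. Since z and v enter F only through explicit
  quadratics, the z- and v-increments of d follow by evaluating F at the minimizer belonging to
  the new argument. For the y-increment, the descent lemma for f in y is combined with quadratic
  growth of F(-,y,z,v) around its minimizer, which holds with modulus r1 - Lx because F is the
  sum of an Lx-smooth function and r1/2 |x - z|^2; it bounds how far the minimizer moves when
  y changes.
\<close>

lemma power2_norm_add:
  fixes x y :: "'a::real_inner"
  shows "(norm (x + y))\<^sup>2 = (norm x)\<^sup>2 + 2 * (x \<bullet> y) + (norm y)\<^sup>2"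
  by (simp add: power2_norm_eq_inner inner_add_left inner_add_right inner_commute)

lemma power2_norm_diff_difference:
  fixes x z z' :: "'a::real_inner"
  shows "(norm (x - z'))\<^sup>2 - (norm (x - z))\<^sup>2 = (z' + z - 2 *\<^sub>R x) \<bullet> (z' - z)"
  by (simp add: power2_norm_eq_inner inner_diff_left inner_diff_right inner_add_left
      inner_commute algebra_simps)

lemma nonneg_if_quadratic_nonneg_near_zero:
  fixes A C :: real
  assumes "\<And>s. 0 < s \<Longrightarrow> s \<le> 1 \<Longrightarrow> 0 \<le> s * A + C * s\<^sup>2"
  shows "0 \<le> A"
proof (rule tendsto_lowerbound)
  show "((\<lambda>s. A + C * s) \<longlongrightarrow> A) (at_right 0)"
    by (auto intro!: tendsto_eq_intros)
  show "\<forall>\<^sub>F s in at_right 0. 0 \<le> A + C * s"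
    unfolding eventually_at_right_field
  proof (intro exI[of _ 1] conjI allI impI)
    fix s :: real
    assume "0 < s" "s < 1"
    with assms have "0 \<le> s * A + C * s\<^sup>2"
      by simp
    also have "\<dots> = s * (A + C * s)"
      by (simp add: power2_eq_square algebra_simps)
    finally have "0 \<le> s * (A + C * s)" .
    with \<open>0 < s\<close> show "0 \<le> A + C * s"
      by (simp add: zero_le_mult_iff)
  qed simp
qed simp

lemma deriv_quadratic_bound:
  fixes \<phi> \<phi>' :: "real \<Rightarrow> real"
  assumes deriv: "\<And>s. (\<phi> has_real_derivative \<phi>' s) (at s)"
    and lip: "\<And>s. 0 \<le> s \<Longrightarrow> s \<le> 1 \<Longrightarrow> \<bar>\<phi>' s - \<phi>' 0\<bar> \<le> K * s"
  shows "\<bar>\<phi> 1 - \<phi> 0 - \<phi>' 0\<bar> \<le> K / 2"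
proof -
  have "(\<lambda>s. \<phi> s - s * \<phi>' 0 - K / 2 * s\<^sup>2) 1 \<le> (\<lambda>s. \<phi> s - s * \<phi>' 0 - K / 2 * s\<^sup>2) 0"
  proof (rule DERIV_nonpos_imp_nonincreasing[of 0 1])
    fix s :: real
    assume "0 \<le> s" "s \<le> 1"
    have "((\<lambda>s. \<phi> s - s * \<phi>' 0 - K / 2 * s\<^sup>2) has_real_derivative \<phi>' s - \<phi>' 0 - K * s) (at s)"
      by (auto intro!: derivative_eq_intros deriv)
    moreover have "\<phi>' s - \<phi>' 0 - K * s \<le> 0"
      using lip[OF \<open>0 \<le> s\<close> \<open>s \<le> 1\<close>] by linarith
    ultimately show "\<exists>D. ((\<lambda>s. \<phi> s - s * \<phi>' 0 - K / 2 * s\<^sup>2) has_real_derivative D) (at s) \<and> D \<le> 0"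
      by blast
  qed simp
  moreover have "(\<lambda>s. \<phi> s - s * \<phi>' 0 + K / 2 * s\<^sup>2) 0 \<le> (\<lambda>s. \<phi> s - s * \<phi>' 0 + K / 2 * s\<^sup>2) 1"
  proof (rule DERIV_nonneg_imp_nondecreasing[of 0 1])
    fix s :: real
    assume "0 \<le> s" "s \<le> 1"
    have "((\<lambda>s. \<phi> s - s * \<phi>' 0 + K / 2 * s\<^sup>2) has_real_derivative \<phi>' s - \<phi>' 0 + K * s) (at s)"
      by (auto intro!: derivative_eq_intros deriv)
    moreover have "\<phi>' s - \<phi>' 0 + K * s \<ge> 0"
      using lip[OF \<open>0 \<le> s\<close> \<open>s \<le> 1\<close>] by linarith
    ultimately show "\<exists>D. ((\<lambda>s. \<phi> s - s * \<phi>' 0 + K / 2 * s\<^sup>2) has_real_derivative D) (at s) \<and> D \<ge> 0"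
      by blast
  qed simp
  ultimately show ?thesis
    unfolding abs_le_iff by simp
qed

lemma lipschitz_gradient_quadratic_bound:
  fixes g :: "'a::real_inner \<Rightarrow> real"
  assumes deriv: "\<And>x. (g has_derivative (\<lambda>h. G x \<bullet> h)) (at x)"
    and S: "convex S" "a \<in> S" "b \<in> S"
    and lip: "\<And>x x'. x \<in> S \<Longrightarrow> x' \<in> S \<Longrightarrow> norm (G x - G x') \<le> L * norm (x - x')"
  shows "\<bar>g b - g a - G a \<bullet> (b - a)\<bar> \<le> L / 2 * (norm (b - a))\<^sup>2"
proof -
  define h where "h = b - a"
  have segment: "a + s *\<^sub>R h \<in> S" if "0 \<le> s" "s \<le> 1" for s
  proof -
    have "a + s *\<^sub>R h = (1 - s) *\<^sub>R a + s *\<^sub>R b"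
      by (simp add: h_def algebra_simps)
    with convexD[OF S, of "1 - s" s] that show ?thesis
      by simp
  qed
  have line_deriv: "((\<lambda>s. g (a + s *\<^sub>R h)) has_real_derivative G (a + s *\<^sub>R h) \<bullet> h) (at s)" for s
  proof -
    have "((\<lambda>s. a + s *\<^sub>R h) has_derivative (\<lambda>t. t *\<^sub>R h)) (at s)"
      by (auto intro!: derivative_eq_intros)
    from diff_chain_at[OF this deriv]
    have "((\<lambda>s. g (a + s *\<^sub>R h)) has_derivative (\<lambda>t. G (a + s *\<^sub>R h) \<bullet> (t *\<^sub>R h))) (at s)"
      by (simp add: o_def)
    then show ?thesis
      unfolding has_field_derivative_def
      by (rule has_derivative_eq_rhs) (simp add: fun_eq_iff)
  qed
  have "\<bar>G (a + s *\<^sub>R h) \<bullet> h - G (a + 0 *\<^sub>R h) \<bullet> h\<bar> \<le> L * (norm h)\<^sup>2 * s"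
    if "0 \<le> s" "s \<le> 1" for s
  proof -
    have "\<bar>G (a + s *\<^sub>R h) \<bullet> h - G (a + 0 *\<^sub>R h) \<bullet> h\<bar> = \<bar>(G (a + s *\<^sub>R h) - G a) \<bullet> h\<bar>"
      by (simp add: inner_diff_left)
    also have "\<dots> \<le> norm (G (a + s *\<^sub>R h) - G a) * norm h"
      by (rule Cauchy_Schwarz_ineq2)
    also have "\<dots> \<le> L * norm (a + s *\<^sub>R h - a) * norm h"
      by (intro mult_right_mono lip segment that S) simp
    also have "\<dots> = L * (norm h)\<^sup>2 * s"
      using that by (simp add: power2_eq_square)
    finally show ?thesis .
  qed
  from deriv_quadratic_bound[OF line_deriv this] show ?thesis
    by (simp add: h_def)
qed

lemma quadratic_growth_at_minimizer:
  fixes g :: "'a::real_inner \<Rightarrow> real"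
  assumes S: "convex S" "a \<in> S" "x \<in> S"
    and model: "\<And>y. y \<in> S \<Longrightarrow> \<bar>g y - g a - G \<bullet> (y - a)\<bar> \<le> L / 2 * (norm (y - a))\<^sup>2"
    and min: "\<And>y. y \<in> S \<Longrightarrow> g a + r / 2 * (norm (a - z))\<^sup>2 \<le> g y + r / 2 * (norm (y - z))\<^sup>2"
  shows "g x + r / 2 * (norm (x - z))\<^sup>2 \<ge> g a + r / 2 * (norm (a - z))\<^sup>2 + (r - L) / 2 * (norm (x - a))\<^sup>2"
proof -
  define h where "h = x - a"
  define w where "w = a - z"
  have expand: "(norm (a + k - z))\<^sup>2 = (norm w)\<^sup>2 + 2 * (w \<bullet> k) + (norm k)\<^sup>2" for k
  proof -
    have "a + k - z = w + k"
      by (simp add: w_def)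
    with power2_norm_add[of w k] show ?thesis
      by (simp only:)
  qed
  have "0 \<le> (G + r *\<^sub>R w) \<bullet> h"
  proof (rule nonneg_if_quadratic_nonneg_near_zero)
    fix s :: real
    assume "0 < s" "s \<le> 1"
    have "a + s *\<^sub>R h = (1 - s) *\<^sub>R a + s *\<^sub>R x"
      by (simp add: h_def algebra_simps)
    with convexD[OF S, of "1 - s" s] \<open>0 < s\<close> \<open>s \<le> 1\<close> have "a + s *\<^sub>R h \<in> S"
      by simp
    have "g a + r / 2 * (norm w)\<^sup>2 \<le> g (a + s *\<^sub>R h) + r / 2 * (norm (a + s *\<^sub>R h - z))\<^sup>2"
      using min[OF \<open>a + s *\<^sub>R h \<in> S\<close>] by (simp add: w_def)
    moreover have "g (a + s *\<^sub>R h) \<le> g a + s * (G \<bullet> h) + L / 2 * (s\<^sup>2 * (norm h)\<^sup>2)"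
      using abs_le_D1[OF model[OF \<open>a + s *\<^sub>R h \<in> S\<close>]] by (simp add: power_mult_distrib)
    moreover have "r / 2 * (norm (a + s *\<^sub>R h - z))\<^sup>2
        = r / 2 * (norm w)\<^sup>2 + s * (r * (w \<bullet> h)) + r / 2 * (s\<^sup>2 * (norm h)\<^sup>2)"
      using expand[of "s *\<^sub>R h"] by (simp add: power_mult_distrib algebra_simps)
    moreover have "s * ((G + r *\<^sub>R w) \<bullet> h) + (L + r) / 2 * (norm h)\<^sup>2 * s\<^sup>2
        = s * (G \<bullet> h) + s * (r * (w \<bullet> h)) + L / 2 * (s\<^sup>2 * (norm h)\<^sup>2) + r / 2 * (s\<^sup>2 * (norm h)\<^sup>2)"
      by (simp add: inner_add_left algebra_simps add_divide_distrib)
    ultimately show "0 \<le> s * ((G + r *\<^sub>R w) \<bullet> h) + (L + r) / 2 * (norm h)\<^sup>2 * s\<^sup>2"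
      by linarith
  qed
  moreover have "g x \<ge> g a + G \<bullet> h - L / 2 * (norm h)\<^sup>2"
    using abs_le_D2[OF model[OF S(3)]] by (simp add: h_def)
  moreover have "r / 2 * (norm (x - z))\<^sup>2 = r / 2 * (norm w)\<^sup>2 + r * (w \<bullet> h) + r / 2 * (norm h)\<^sup>2"
  proof -
    have "(norm (x - z))\<^sup>2 = (norm w)\<^sup>2 + 2 * (w \<bullet> h) + (norm h)\<^sup>2"
      using expand[of h] by (simp add: h_def)
    then show ?thesis
      by (simp add: algebra_simps)
  qed
  moreover have "(G + r *\<^sub>R w) \<bullet> h = G \<bullet> h + r * (w \<bullet> h)"
    by (simp add: inner_add_left)
  moreover have "(r - L) / 2 * (norm h)\<^sup>2 = r / 2 * (norm h)\<^sup>2 - L / 2 * (norm h)\<^sup>2"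
    by (simp add: diff_divide_distrib left_diff_distrib)
  ultimately show ?thesis
    unfolding h_def[symmetric] w_def[symmetric] by linarith
qed

lemma has_derivative_partial_fst:
  assumes "((\<lambda>p. f (fst p) (snd p)) has_derivative D) (at (a, b))"
  shows "((\<lambda>x. f x b) has_derivative (\<lambda>h. D (h, 0))) (at a)"
proof -
  have "((\<lambda>x. (x, b)) has_derivative (\<lambda>h. (h, 0))) (at a)"
    by (auto intro!: derivative_eq_intros)
  from diff_chain_at[OF this assms] show ?thesis
    by (simp add: o_def)
qed

lemma has_derivative_partial_snd:
  assumes "((\<lambda>p. f (fst p) (snd p)) has_derivative D) (at (a, b))"
  shows "((\<lambda>y. f a y) has_derivative (\<lambda>k. D (0, k))) (at b)"
proof -
  have "((\<lambda>y. (a, y)) has_derivative (\<lambda>k. (0, k))) (at b)"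
    by (auto intro!: derivative_eq_intros)
  from diff_chain_at[OF this assms] show ?thesis
    by (simp add: o_def)
qed

locale smooth_minimax =
  fixes f :: "'a::euclidean_space \<Rightarrow> 'b::euclidean_space \<Rightarrow> real"
    and gx :: "'a \<Rightarrow> 'b \<Rightarrow> 'a" and gy :: "'a \<Rightarrow> 'b \<Rightarrow> 'b"
    and X :: "'a set" and Y :: "'b set" and Lx Ly :: real
  assumes gradient: "\<And>a b. ((\<lambda>p. f (fst p) (snd p)) has_derivative
                       (\<lambda>h. gx a b \<bullet> fst h + gy a b \<bullet> snd h)) (at (a, b))"
    and convex_X: "convex X" and compact_X: "compact X" and X_nonempty: "X \<noteq> {}"
    and convex_Y: "convex Y"
    and lipschitz_gx: "\<And>a a' b b'. a \<in> X \<Longrightarrow> a' \<in> X \<Longrightarrow> b \<in> Y \<Longrightarrow> b' \<in> Y \<Longrightarrow>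
                         norm (gx a b - gx a' b') \<le> Lx * (norm (a - a') + norm (b - b'))"
    and lipschitz_gy: "\<And>a a' b b'. a \<in> X \<Longrightarrow> a' \<in> X \<Longrightarrow> b \<in> Y \<Longrightarrow> b' \<in> Y \<Longrightarrow>
                         norm (gy a b - gy a' b') \<le> Ly * (norm (a - a') + norm (b - b'))"
begin

lemma quadratic_bound_x:
  assumes "a \<in> X" "a' \<in> X" "b \<in> Y"
  shows "\<bar>f a' b - f a b - gx a b \<bullet> (a' - a)\<bar> \<le> Lx / 2 * (norm (a' - a))\<^sup>2"
proof (rule lipschitz_gradient_quadratic_bound[where G = "\<lambda>x. gx x b"])
  show "((\<lambda>x. f x b) has_derivative (\<lambda>h. gx x b \<bullet> h)) (at x)" for x
    using has_derivative_partial_fst[OF gradient[of x b]] by simp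
  show "norm (gx x b - gx x' b) \<le> Lx * norm (x - x')" if "x \<in> X" "x' \<in> X" for x x'
    using lipschitz_gx[OF that \<open>b \<in> Y\<close> \<open>b \<in> Y\<close>] by simp
qed (use assms convex_X in auto)

lemma quadratic_bound_y:
  assumes "a \<in> X" "b \<in> Y" "b' \<in> Y"
  shows "\<bar>f a b' - f a b - gy a b \<bullet> (b' - b)\<bar> \<le> Ly / 2 * (norm (b' - b))\<^sup>2"
proof (rule lipschitz_gradient_quadratic_bound[where G = "gy a"])
  show "(f a has_derivative (\<lambda>k. gy a y \<bullet> k)) (at y)" for y
    using has_derivative_partial_snd[OF gradient[of a y]] by simp
  show "norm (gy a y - gy a y') \<le> Ly * norm (y - y')" if "y \<in> Y" "y' \<in> Y" for y y'
    using lipschitz_gy[OF \<open>a \<in> X\<close> \<open>a \<in> X\<close> that] by simp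
qed (use assms convex_Y in auto)

lemma FF_x_split: "FF f r1 r2 x b z v = (f x b - r2 / 2 * (norm (b - v))\<^sup>2) + r1 / 2 * (norm (x - z))\<^sup>2"
  by (simp add: FF_def)

lemma FF_quadratic_growth:
  assumes "a \<in> X" "x \<in> X" "b \<in> Y"
    and min: "\<And>x'. x' \<in> X \<Longrightarrow> FF f r1 r2 a b z v \<le> FF f r1 r2 x' b z v"
  shows "FF f r1 r2 x b z v \<ge> FF f r1 r2 a b z v + (r1 - Lx) / 2 * (norm (x - a))\<^sup>2"
  unfolding FF_x_split
proof (rule quadratic_growth_at_minimizer[OF convex_X \<open>a \<in> X\<close> \<open>x \<in> X\<close>])
  show "\<bar>f y b - r2 / 2 * (norm (b - v))\<^sup>2 - (f a b - r2 / 2 * (norm (b - v))\<^sup>2) - gx a b \<bullet> (y - a)\<bar>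
      \<le> Lx / 2 * (norm (y - a))\<^sup>2" if "y \<in> X" for y
    using quadratic_bound_x[OF \<open>a \<in> X\<close> that \<open>b \<in> Y\<close>] by simp
  show "f a b - r2 / 2 * (norm (b - v))\<^sup>2 + r1 / 2 * (norm (a - z))\<^sup>2
      \<le> f y b - r2 / 2 * (norm (b - v))\<^sup>2 + r1 / 2 * (norm (y - z))\<^sup>2" if "y \<in> X" for y
    using min[OF that] by (simp add: FF_x_split)
qed

lemma xopt_unique_minimizer:
  assumes "Lx < r1" "b \<in> Y"
  shows "\<exists>!x. x \<in> X \<and> (\<forall>x'\<in>X. FF f r1 r2 x b z v \<le> FF f r1 r2 x' b z v)"
proof -
  have "continuous_on X (\<lambda>x. f x b)"
    using has_derivative_continuous_on[OF has_derivative_partial_fst[OF gradient]]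
    by (blast intro: continuous_on_subset)
  then have "continuous_on X (\<lambda>x. FF f r1 r2 x b z v)"
    unfolding FF_def by (intro continuous_intros)
  then obtain a where a: "a \<in> X" "\<forall>x'\<in>X. FF f r1 r2 a b z v \<le> FF f r1 r2 x' b z v"
    using continuous_attains_inf[OF compact_X X_nonempty] by blast
  show ?thesis
  proof (rule ex1I[of _ a])
    fix x
    assume x: "x \<in> X \<and> (\<forall>x'\<in>X. FF f r1 r2 x b z v \<le> FF f r1 r2 x' b z v)"
    with a have "FF f r1 r2 a b z v + (r1 - Lx) / 2 * (norm (x - a))\<^sup>2 \<le> FF f r1 r2 a b z v"
      using FF_quadratic_growth[OF \<open>a \<in> X\<close> _ \<open>b \<in> Y\<close>, of x r1 r2 z v] by fastforce
    with \<open>Lx < r1\<close> show "x = a"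
      by (simp add: mult_le_0_iff)
  qed (use a in blast)
qed

lemma
  assumes "Lx < r1" "b \<in> Y"
  shows xopt_in_X: "xopt f r1 r2 X b z v \<in> X"
    and xopt_minimal: "x \<in> X \<Longrightarrow> FF f r1 r2 (xopt f r1 r2 X b z v) b z v \<le> FF f r1 r2 x b z v"
  using theI'[OF xopt_unique_minimizer[OF assms, of r2 z v]] unfolding xopt_def[symmetric] by auto

lemma dfun_eq_FF_xopt:
  assumes "Lx < r1" "b \<in> Y"
  shows "dfun f r1 r2 X b z v = FF f r1 r2 (xopt f r1 r2 X b z v) b z v"
  unfolding dfun_def using xopt_in_X[OF assms] xopt_minimal[OF assms]
  by (intro cInf_eq_minimum) auto

lemma dfun_le_FF:
  assumes "Lx < r1" "b \<in> Y" "x \<in> X"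
  shows "dfun f r1 r2 X b z v \<le> FF f r1 r2 x b z v"
  using dfun_eq_FF_xopt[OF assms(1,2)] xopt_minimal[OF assms] by simp

lemma dfun_increment_v:
  assumes "Lx < r1" "b \<in> Y" "\<mu> \<noteq> 0" and v': "v' = v + \<mu> *\<^sub>R (b - v)"
  shows "dfun f r1 r2 X b z v' \<ge> dfun f r1 r2 X b z v + (2 - \<mu>) * r2 / (2 * \<mu>) * (norm (v' - v))\<^sup>2"
proof -
  define a where "a = xopt f r1 r2 X b z v'"
  have "a \<in> X"
    using xopt_in_X[OF assms(1,2)] by (simp add: a_def)
  have "b - v' = (1 - \<mu>) *\<^sub>R (b - v)" "v' - v = \<mu> *\<^sub>R (b - v)"
    using v' by (simp_all add: algebra_simps)
  then have q: "(norm (b - v'))\<^sup>2 = (1 - \<mu>)\<^sup>2 * (norm (b - v))\<^sup>2" "(norm (v' - v))\<^sup>2 = \<mu>\<^sup>2 * (norm (b - v))\<^sup>2"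
    by (simp_all add: power_mult_distrib)
  have "r2 / 2 * ((norm (b - v))\<^sup>2 - (norm (b - v'))\<^sup>2) = (2 - \<mu>) * r2 / (2 * \<mu>) * (norm (v' - v))\<^sup>2"
    unfolding q using \<open>\<mu> \<noteq> 0\<close> by (simp add: field_simps power2_eq_square)
  moreover have "FF f r1 r2 a b z v' = FF f r1 r2 a b z v + r2 / 2 * ((norm (b - v))\<^sup>2 - (norm (b - v'))\<^sup>2)"
    by (simp add: FF_def algebra_simps)
  ultimately show ?thesis
    using dfun_eq_FF_xopt[OF assms(1,2), of r2 z v'] dfun_le_FF[OF assms(1,2) \<open>a \<in> X\<close>, of r2 z v]
    by (simp add: a_def)
qed

lemma dfun_increment_z:
  assumes "Lx < r1" "b \<in> Y"
  shows "dfun f r1 r2 X b z' v \<ge> dfun f r1 r2 X b z v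
           + r1 / 2 * ((z' + z - 2 *\<^sub>R xopt f r1 r2 X b z' v) \<bullet> (z' - z))"
proof -
  define a where "a = xopt f r1 r2 X b z' v"
  have "a \<in> X"
    using xopt_in_X[OF assms] by (simp add: a_def)
  have "FF f r1 r2 a b z' v = FF f r1 r2 a b z v + r1 / 2 * ((norm (a - z'))\<^sup>2 - (norm (a - z))\<^sup>2)"
    by (simp add: FF_def algebra_simps)
  then show ?thesis
    using dfun_eq_FF_xopt[OF assms, of r2 z' v] dfun_le_FF[OF assms \<open>a \<in> X\<close>, of r2 z v]
      power2_norm_diff_difference[of a z' z]
    by (simp add: a_def)
qed

text \<open>The constant is sharper than the one in the theorem by Ly: by AM-GM, the drift
  of the minimizer costs only Ly^2 / (r1 - Lx).\<close>

lemma dfun_increment_y: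
  assumes "Lx < r1" "b \<in> Y" "b' \<in> Y"
  shows "dfun f r1 r2 X b' z v \<ge> dfun f r1 r2 X b z v
           + gradyF gy r2 (xopt f r1 r2 X b z v) b z v \<bullet> (b' - b)
           - (Ly\<^sup>2 / (r1 - Lx) + Ly + r2) / 2 * (norm (b' - b))\<^sup>2"
proof -
  define x where "x = xopt f r1 r2 X b z v"
  define x' where "x' = xopt f r1 r2 X b' z v"
  define u where "u = norm (x' - x)"
  define A where "A = norm (b' - b)"
  define m where "m = r1 - Lx"
  have "m > 0"
    using assms by (simp add: m_def)
  have "x \<in> X" "x' \<in> X"
    using xopt_in_X assms by (simp_all add: x_def x'_def)
  have growth: "FF f r1 r2 x' b z v \<ge> FF f r1 r2 x b z v + m / 2 * u\<^sup>2"
    using FF_quadratic_growth[OF \<open>x \<in> X\<close> \<open>x' \<in> X\<close> \<open>b \<in> Y\<close>] xopt_minimal[OF assms(1,2)]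
    by (simp add: x_def m_def u_def)
  have descent: "f x' b' \<ge> f x' b + gy x' b \<bullet> (b' - b) - Ly / 2 * A\<^sup>2"
    using abs_le_D2[OF quadratic_bound_y[OF \<open>x' \<in> X\<close> \<open>b \<in> Y\<close> \<open>b' \<in> Y\<close>]] by (simp add: A_def)
  have drift: "gy x' b \<bullet> (b' - b) \<ge> gy x b \<bullet> (b' - b) - Ly * u * A"
  proof -
    have "\<bar>(gy x' b - gy x b) \<bullet> (b' - b)\<bar> \<le> norm (gy x' b - gy x b) * A"
      unfolding A_def by (rule Cauchy_Schwarz_ineq2)
    also have "\<dots> \<le> Ly * u * A"
      using lipschitz_gy[OF \<open>x' \<in> X\<close> \<open>x \<in> X\<close> \<open>b \<in> Y\<close> \<open>b \<in> Y\<close>]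
      by (intro mult_right_mono) (simp_all add: u_def A_def)
    finally show ?thesis
      by (simp add: inner_diff_left abs_le_iff)
  qed
  have am_gm: "m / 2 * u\<^sup>2 - Ly * u * A \<ge> - (Ly\<^sup>2 / m) / 2 * A\<^sup>2"
  proof -
    have "0 \<le> (m * u - Ly * A)\<^sup>2 / (2 * m)"
      using \<open>m > 0\<close> by simp
    with \<open>m > 0\<close> show ?thesis
      by (simp add: field_simps power2_eq_square)
  qed
  have expand: "(norm (b' - v))\<^sup>2 = (norm (b - v))\<^sup>2 + 2 * ((b - v) \<bullet> (b' - b)) + A\<^sup>2"
    using power2_norm_add[of "b - v" "b' - b"] by (simp add: A_def)
  have "FF f r1 r2 x' b' z v = FF f r1 r2 x' b z v + (f x' b' - f x' b)
      - r2 * ((b - v) \<bullet> (b' - b)) - r2 / 2 * A\<^sup>2"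
    unfolding FF_def expand by (simp add: algebra_simps)
  moreover have "gradyF gy r2 x b z v \<bullet> (b' - b) = gy x b \<bullet> (b' - b) - r2 * ((b - v) \<bullet> (b' - b))"
    by (simp add: gradyF_def inner_diff_left)
  moreover have "(Ly\<^sup>2 / (r1 - Lx) + Ly + r2) / 2 * A\<^sup>2 = (Ly\<^sup>2 / m) / 2 * A\<^sup>2 + Ly / 2 * A\<^sup>2 + r2 / 2 * A\<^sup>2"
    by (simp add: m_def add_divide_distrib distrib_right)
  ultimately show ?thesis
    using dfun_eq_FF_xopt[OF assms(1,3), of r2 z v] dfun_eq_FF_xopt[OF assms(1,2), of r2 z v]
      growth descent drift am_gm
    unfolding x_def[symmetric] x'_def[symmetric] A_def[symmetric] by linarith
qed

end

theorem lemma6: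
  fixes f :: "'a::euclidean_space \<Rightarrow> 'b::euclidean_space \<Rightarrow> real"
    and gx :: "'a \<Rightarrow> 'b \<Rightarrow> 'a" and gy :: "'a \<Rightarrow> 'b \<Rightarrow> 'b"
    and X :: "'a set" and Y :: "'b set"
    and Lx Ly r1 r2 c \<alpha> \<beta> \<mu> :: real
    and x z :: "nat \<Rightarrow> 'a" and y v :: "nat \<Rightarrow> 'b"
    and t :: nat
  assumes X: "convex X" "compact X" "X \<noteq> {}"
    and Y: "convex Y" "compact Y" "Y \<noteq> {}"
    and deriv: "\<And>a b. ((\<lambda>p. f (fst p) (snd p)) has_derivative
                   (\<lambda>h. gx a b \<bullet> fst h + gy a b \<bullet> snd h)) (at (a, b))"
    and cont_gx: "continuous_on UNIV (\<lambda>p. gx (fst p) (snd p))"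
    and cont_gy: "continuous_on UNIV (\<lambda>p. gy (fst p) (snd p))"
    and Lpos: "Lx > 0" "Ly > 0"
    and Lip_x: "\<And>a a' b b'. a \<in> X \<Longrightarrow> a' \<in> X \<Longrightarrow> b \<in> Y \<Longrightarrow> b' \<in> Y \<Longrightarrow>
                  norm (gx a b - gx a' b') \<le> Lx * (norm (a - a') + norm (b - b'))"
    and Lip_y: "\<And>a a' b b'. a \<in> X \<Longrightarrow> a' \<in> X \<Longrightarrow> b \<in> Y \<Longrightarrow> b' \<in> Y \<Longrightarrow>
                  norm (gy a b - gy a' b') \<le> Ly * (norm (a - a') + norm (b - b'))"
    and r: "r1 > Lx" "r2 > Ly"
    and steps: "c > 0" "\<alpha> > 0" "0 < \<beta>" "\<beta> < 1" "0 < \<mu>" "\<mu> < 1"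
    and init: "x 0 \<in> X" "y 0 \<in> Y"
    and upd_x: "\<And>s. x (Suc s) = closest_point X (x s - c *\<^sub>R gradxF gx r1 (x s) (y s) (z s) (v s))"
    and upd_y: "\<And>s. y (Suc s) = closest_point Y (y s + \<alpha> *\<^sub>R gradyF gy r2 (x (Suc s)) (y s) (z s) (v s))"
    and upd_z: "\<And>s. z (Suc s) = z s + \<beta> *\<^sub>R (x (Suc s) - z s)"
    and upd_v: "\<And>s. v (Suc s) = v s + \<mu> *\<^sub>R (y (Suc s) - v s)"
  shows "let \<sigma>1 = (Ly + r1 - Lx) / (r1 - Lx);
             Ld = Ly * \<sigma>1 + Ly + r2;
             d = dfun f r1 r2 X;
             xo = xopt f r1 r2 X
         in d (y (Suc t)) (z (Suc t)) (v (Suc t))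
            \<ge> d (y t) (z t) (v t)
              + (2 - \<mu>) * r2 / (2 * \<mu>) * (norm (v (Suc t) - v t))\<^sup>2
              + r1 / 2 * ((z (Suc t) + z t - 2 *\<^sub>R xo (y (Suc t)) (z (Suc t)) (v t)) \<bullet> (z (Suc t) - z t))
              + gradyF gy r2 (xo (y t) (z t) (v t)) (y t) (z t) (v t) \<bullet> (y (Suc t) - y t)
              - Ld / 2 * (norm (y (Suc t) - y t))\<^sup>2"
proof -
  interpret smooth_minimax f gx gy X Y Lx Ly
    using X Y(1) deriv Lip_x Lip_y by unfold_locales auto
  have y_in_Y: "y s \<in> Y" for s
  proof (cases s)
    case (Suc s')
    then show ?thesis
      using upd_y[of s'] closest_point_in_set[OF compact_imp_closed[OF Y(2)] Y(3)] by simp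
  qed (use init in simp)
  define D where "D = (norm (y (Suc t) - y t))\<^sup>2"
  have "(Ly * ((Ly + r1 - Lx) / (r1 - Lx)) + Ly + r2) / 2 * D
      = (Ly\<^sup>2 / (r1 - Lx) + Ly + r2) / 2 * D + Ly / 2 * D"
    using r by (simp add: field_simps power2_eq_square)
  moreover have "Ly / 2 * D \<ge> 0"
    using Lpos by (simp add: D_def)
  moreover note
    dfun_increment_v[OF r(1) y_in_Y[of "Suc t"] _ upd_v[of t], of r2 "z (Suc t)"]
    dfun_increment_z[OF r(1) y_in_Y[of "Suc t"], where z = "z t" and z' = "z (Suc t)" and v = "v t", of r2]
    dfun_increment_y[OF r(1) y_in_Y[of t] y_in_Y[of "Suc t"], of r2 "z t" "v t"]
  ultimately show ?thesis
    unfolding Let_def D_def[symmetric] using \<open>0 < \<mu>\<close> by linarith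
qed

end
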